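(* Let $\epsilon\in(0,1)$ and $0<h\le2\epsilon^2$. Then there exists an initial value $u_0$ with $|u_0|>1$ such that the sequence $(u_n)_{n\ge0}$ starting at $u_0$ and satisfying the implicit midpoint scheme $$\frac{u_n-u_{n-1}}{h}+\frac{1}{\epsilon^2}f\!\left(\frac{u_n+u_{n-1}}{2}\right)=0,\qquad n\ge1,\quad f(u)=u^3-u,$$ converges to an incorrect steady state, i.e. $\lim_{n\to\infty}u_n\ne\mathrm{sign}(u_0)$.
   Context: The scheme discretizes the ODE $u'(t)+\frac{1}{\epsilon^2}(u^3-u)=0$, $u(0)=u_0$, whose solutions converge to $\mathrm{sign}(u_0)$. For $h\le2\epsilon^2$ each step equation has a unique real solution $u_n$, so the sequence is uniquely determined. *)

theory Defs
  imports Complex_Main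
begin

definition ac_f :: "real \<Rightarrow> real" where
  "ac_f u = u ^ 3 - u"

definition midpoint_seq :: "real \<Rightarrow> real \<Rightarrow> (nat \<Rightarrow> real) \<Rightarrow> bool" where
  "midpoint_seq eps h u \<longleftrightarrow>
     (\<forall>n\<ge>1. (u n - u (n - 1)) / h + (1 / eps ^ 2) * ac_f ((u n + u (n - 1)) / 2) = 0)"

end

theory Submission
  imports Defs
begin

text \<open>
  Write \<open>r = h / \<epsilon>\<^sup>2\<close>. A step of the scheme from \<open>a\<close> solves \<open>x + r f((x + a)/2) = a\<close>, and for
  \<open>r \<le> 2\<close> the left-hand side is strictly increasing in \<open>x\<close>, so the sequence is determined by its
  initial value. For \<open>v = sqrt (8 / r + 4) > 1\<close> one has \<open>r f(v/2) = v\<close>, so the step from \<open>v\<close>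
  lands exactly on the unstable equilibrium \<open>0\<close> of \<open>f\<close>, where the scheme then stays forever:
  the limit is \<open>0 \<noteq> sgn v\<close>.
\<close>

lemma ac_f_diff: "ac_f p - ac_f q = (p - q) * (p\<^sup>2 + p * q + q\<^sup>2 - 1)"
  by (simp add: ac_f_def algebra_simps power2_eq_square power3_eq_cube)

lemma sum_sq_plus_prod_pos:
  fixes p q :: real
  assumes "p \<noteq> q"
  shows "p\<^sup>2 + p * q + q\<^sup>2 > 0"
proof -
  have "p\<^sup>2 + p * q + q\<^sup>2 = (p + q / 2)\<^sup>2 + 3 / 4 * q\<^sup>2"
    by (simp add: algebra_simps power2_eq_square)
  moreover have "(p + q / 2)\<^sup>2 + 3 / 4 * q\<^sup>2 > 0"
    using assms by (cases "q = 0") (simp_all add: add_nonneg_pos)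
  ultimately show ?thesis by simp
qed

lemma strict_mono_midpoint_step:
  fixes r a :: real
  assumes "0 \<le> r" "r \<le> 2"
  shows "strict_mono (\<lambda>x. x + r * ac_f ((x + a) / 2))"
proof (rule strict_monoI)
  fix x y :: real
  assume "x < y"
  define p q where "p = (x + a) / 2" and "q = (y + a) / 2"
  have "p < q" using \<open>x < y\<close> by (simp add: p_def q_def)
  have "0 < q\<^sup>2 + q * p + p\<^sup>2"
    using sum_sq_plus_prod_pos[of q p] \<open>p < q\<close> by simp
  then have "0 < 2 - r + r * (q\<^sup>2 + q * p + p\<^sup>2)"
    using assms by (cases "r = 0") (simp_all add: add_nonneg_pos)
  then have "0 < (q - p) * (2 - r + r * (q\<^sup>2 + q * p + p\<^sup>2))"
    using \<open>p < q\<close> by simp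
  also have "\<dots> = 2 * (q - p) + r * (ac_f q - ac_f p)"
    by (simp add: ac_f_diff algebra_simps)
  also have "\<dots> = (y + r * ac_f q) - (x + r * ac_f p)"
    by (simp add: p_def q_def field_simps)
  finally show "x + r * ac_f ((x + a) / 2) < y + r * ac_f ((y + a) / 2)"
    by (simp add: p_def q_def)
qed

lemma midpoint_seq_iff:
  fixes eps h :: real
  assumes "h \<noteq> 0"
  shows "midpoint_seq eps h u \<longleftrightarrow>
    (\<forall>n\<ge>1. u n + h / eps\<^sup>2 * ac_f ((u n + u (n - 1)) / 2) = u (n - 1))"
proof -
  have "(x - a) / h + 1 / eps\<^sup>2 * ac_f ((x + a) / 2) =
        (x + h / eps\<^sup>2 * ac_f ((x + a) / 2) - a) / h" for x a
    using assms by (simp add: field_simps)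
  then show ?thesis
    unfolding midpoint_seq_def using assms by simp
qed

lemma midpoint_seq_unique:
  fixes eps h :: real
  assumes "0 < h" "h \<le> 2 * eps\<^sup>2"
    and u: "midpoint_seq eps h u" and w: "midpoint_seq eps h w" and "u 0 = w 0"
  shows "u = w"
proof
  define r where "r = h / eps\<^sup>2"
  have "eps\<^sup>2 > 0"
    using assms(1,2) by linarith
  then have "0 \<le> r" "r \<le> 2"
    using assms(1,2) by (simp_all add: r_def pos_divide_le_eq)
  then have inj: "inj (\<lambda>x. x + r * ac_f ((x + a) / 2))" for a
    using strict_mono_midpoint_step strict_mono_imp_inj_on by blast
  have step: "v (Suc n) + r * ac_f ((v (Suc n) + v n) / 2) = v n"
    if "midpoint_seq eps h v" for v n
  proof -
    have "\<forall>m\<ge>1. v m + r * ac_f ((v m + v (m - 1)) / 2) = v (m - 1)"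
      using that assms(1) by (simp add: midpoint_seq_iff r_def)
    from this[rule_format, of "Suc n"] show ?thesis
      by simp
  qed
  fix n
  show "u n = w n"
  proof (induction n)
    case 0
    show ?case by fact
  next
    case (Suc n)
    then show ?case
      using step[OF u, of n] step[OF w, of n] injD[OF inj] by metis
  qed
qed

lemma ac_f_half_sqrt:
  fixes r :: real
  assumes "0 < r"
  shows "r * ac_f (sqrt (8 / r + 4) / 2) = sqrt (8 / r + 4)"
proof -
  define v where "v = sqrt (8 / r + 4)"
  have "v\<^sup>2 = 8 / r + 4"
    using assms by (simp add: v_def)
  then have "r * (v\<^sup>2 / 8 - 1 / 2) = 1"
    using assms by (simp add: field_simps)
  moreover have "r * ac_f (v / 2) = v * (r * (v\<^sup>2 / 8 - 1 / 2))"
    by (simp add: ac_f_def algebra_simps power2_eq_square power3_eq_cube)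
  ultimately show ?thesis
    by (simp add: v_def)
qed

lemma midpoint_seq_jump_to_zero:
  fixes eps h :: real
  assumes "0 < h" "eps \<noteq> 0"
  shows "midpoint_seq eps h (\<lambda>n. if n = 0 then sqrt (8 * eps\<^sup>2 / h + 4) else 0)"
    (is "midpoint_seq eps h ?z")
proof -
  define r where "r = h / eps\<^sup>2"
  have "0 < r"
    using assms by (simp add: r_def)
  have "?z n + r * ac_f ((?z n + ?z (n - 1)) / 2) = ?z (n - 1)" if "n \<ge> 1" for n
    using ac_f_half_sqrt[OF \<open>0 < r\<close>] that
    by (cases "n = 1") (simp_all add: r_def ac_f_def)
  then show ?thesis
    using assms(1) by (simp add: midpoint_seq_iff r_def)
qed

theorem lemma3p6:
  fixes eps h :: real
  assumes "0 < eps" and "eps < 1" and "0 < h" and "h \<le> 2 * eps ^ 2"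
  shows "\<exists>u0. \<bar>u0\<bar> > 1 \<and>
           (\<exists>u. u 0 = u0 \<and> midpoint_seq eps h u) \<and>
           (\<forall>u. u 0 = u0 \<and> midpoint_seq eps h u \<longrightarrow>
                 (\<exists>L. u \<longlonglongrightarrow> L \<and> L \<noteq> sgn u0))"
proof -
  define v where "v = sqrt (8 * eps\<^sup>2 / h + 4)"
  define z :: "nat \<Rightarrow> real" where "z n = (if n = 0 then v else 0)" for n
  have "v > 1"
    using assms(1,3) by (simp add: v_def add_nonneg_pos)
  have z: "midpoint_seq eps h z"
    unfolding z_def v_def using assms(1,3) by (simp add: midpoint_seq_jump_to_zero)
  have "z \<longlonglongrightarrow> 0"
    by (rule LIMSEQ_imp_Suc) (simp add: z_def)
  then have lim: "u \<longlonglongrightarrow> 0" if "u 0 = v" "midpoint_seq eps h u" for u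
    using midpoint_seq_unique[OF assms(3,4) that(2) z] that(1) by (simp add: z_def)
  show ?thesis
  proof (rule exI[of _ v], intro conjI allI impI)
    show "\<bar>v\<bar> > 1"
      using \<open>v > 1\<close> by simp
    show "\<exists>u. u 0 = v \<and> midpoint_seq eps h u"
      using z by (intro exI[of _ z]) (simp add: z_def)
    fix u
    assume "u 0 = v \<and> midpoint_seq eps h u"
    then have "u \<longlonglongrightarrow> 0"
      using lim by blast
    moreover have "0 \<noteq> sgn v"
      using \<open>v > 1\<close> by simp
    ultimately show "\<exists>L. u \<longlonglongrightarrow> L \<and> L \<noteq> sgn v"
      by blast
  qed
qed

end
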